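(* Let $L\subseteq\Sigma^*$ be a regular language. Then the following are equivalent: (1) $V_L(n)\in O(\log n)$; (2) $|\Sigma^{\le n}/{\approx_L}|$ is polynomially bounded in $n$; (3) the Myhill–Nerode right congruence $\sim_L$ has no critical tuple.
   Context: $\sim_L$ is the Myhill–Nerode right congruence: $x\sim_L y$ iff $\{z: xz\in L\}=\{z:yz\in L\}$. For an equivalence $\sim$ on $\Sigma^*$, its suffix expansion $\approx$ is defined by $a_1\cdots a_n\approx b_1\cdots b_m$ iff $n=m$ and $a_i\cdots a_n\sim b_i\cdots b_n$ for all $1\le i\le n$; $\approx_L$ is the suffix expansion of $\sim_L$, and $\Sigma^{\le n}/{\approx_L}$ is the set of $\approx_L$-classes of words of length at most $n$. A critical tuple in a right congruence $\sim$ is a tuple $(u_2,v_2,u,v)$ of words with $|u_2|=|v_2|\ge1$, $u=u_1u_2$ and $v=v_1v_2$ for some words $u_1,v_1$, and $u_2w\not\sim v_2w$ for all $w\in\{u,v\}^*$. $V_L(n)$ is the variable-size sliding window space complexity of $L$: with $\overline\Sigma=\Sigma\cup\{\downarrow\}$, the active window is $\mathrm{wnd}(\varepsilon)=\varepsilon$, $\mathrm{wnd}(ua)=\mathrm{wnd}(u)a$ ($a\in\Sigma$), $\mathrm{wnd}(u\downarrow)=\varepsilon$ if $\mathrm{wnd}(u)=\varepsilon$ and $=v$ if $\mathrm{wnd}(u)=av$. A variable-size sliding window algorithm for $L$ is a deterministic (possibly infinite-state) automaton over $\overline\Sigma$ whose states are bit strings, outputting after each prefix whether the current window is in $L$; its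 space complexity at $n$ is the maximal bit-string length of states reached on inputs whose window never exceeds length $n$; $V_L(n)$ is the space complexity of a space-optimal such algorithm (which exists). *)

theory Defs
  imports Complex_Main "HOL-Library.Landau_Symbols" "HOL-Library.Extended_Nat"
begin

definition regular :: "'a list set \<Rightarrow> bool" where
  "regular L \<longleftrightarrow> (\<exists>(Q::nat set) (q0::nat) (\<delta>::nat \<Rightarrow> 'a \<Rightarrow> nat) (F::nat set).
      finite Q \<and> q0 \<in> Q \<and> (\<forall>q\<in>Q. \<forall>a. \<delta> q a \<in> Q) \<and>
      (\<forall>w. w \<in> L \<longleftrightarrow> foldl \<delta> q0 w \<in> F))"

definition MN :: "'a list set \<Rightarrow> 'a list \<Rightarrow> 'a list \<Rightarrow> bool" where
  "MN L x y \<longleftrightarrow> (\<forall>z. x @ z \<in> L \<longleftrightarrow> y @ z \<in> L)"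

text \<open>Suffix expansion: same length and all nonempty suffixes a_i...a_n (i = 1..n),
  i.e. drop (i-1), are related.\<close>
definition suffix_exp :: "('a list \<Rightarrow> 'a list \<Rightarrow> bool) \<Rightarrow> 'a list \<Rightarrow> 'a list \<Rightarrow> bool" where
  "suffix_exp R u v \<longleftrightarrow> length u = length v \<and> (\<forall>i < length u. R (drop i u) (drop i v))"

definition approx_classes :: "'a list set \<Rightarrow> nat \<Rightarrow> 'a list set set" where
  "approx_classes L n = {w. length w \<le> n} // {(u, v). suffix_exp (MN L) u v}"

definition star2 :: "'a list \<Rightarrow> 'a list \<Rightarrow> 'a list set" where
  "star2 u v = {concat ws | ws. set ws \<subseteq> {u, v}}"

definition critical_tuple :: "('a list \<Rightarrow> 'a list \<Rightarrow> bool) \<Rightarrow> 'a list \<Rightarrow> 'a list \<Rightarrow> 'a list \<Rightarrow> 'a list \<Rightarrow> bool" where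
  "critical_tuple R u2 v2 u v \<longleftrightarrow>
     length u2 = length v2 \<and> length u2 \<ge> 1 \<and>
     (\<exists>u1. u = u1 @ u2) \<and> (\<exists>v1. v = v1 @ v2) \<and>
     (\<forall>w \<in> star2 u v. \<not> R (u2 @ w) (v2 @ w))"

datatype 'a sym = Sym 'a | Pop

fun wstep :: "'a list \<Rightarrow> 'a sym \<Rightarrow> 'a list" where
  "wstep w (Sym a) = w @ [a]"
| "wstep w Pop = tl w"   \<comment> \<open>tl [] = []\<close>

definition wnd :: "'a sym list \<Rightarrow> 'a list" where
  "wnd u = foldl wstep [] u"

text \<open>A deterministic automaton over the extended alphabet whose states are bit strings:
  initial state, transition function, output function.\<close>
type_synonym 'a swa = "bool list \<times> (bool list \<Rightarrow> 'a sym \<Rightarrow> bool list) \<times> (bool list \<Rightarrow> bool)"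

definition run :: "'a swa \<Rightarrow> 'a sym list \<Rightarrow> bool list" where
  "run A u = (case A of (q0, \<delta>, out) \<Rightarrow> foldl \<delta> q0 u)"

definition swa_out :: "'a swa \<Rightarrow> bool list \<Rightarrow> bool" where
  "swa_out A q = (case A of (q0, \<delta>, out) \<Rightarrow> out q)"

definition swa_for :: "'a swa \<Rightarrow> 'a list set \<Rightarrow> bool" where
  "swa_for A L \<longleftrightarrow> (\<forall>u. swa_out A (run A u) \<longleftrightarrow> wnd u \<in> L)"

definition space :: "'a swa \<Rightarrow> nat \<Rightarrow> enat" where
  "space A n = (SUP u \<in> {u. \<forall>i \<le> length u. length (wnd (take i u)) \<le> n}. enat (length (run A u)))"

text \<open>Space complexity of a space-optimal algorithm: pointwise infimum over all correct algorithms
  (which coincides with the space of a space-optimal algorithm, when one exists).\<close>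
definition V :: "'a list set \<Rightarrow> nat \<Rightarrow> enat" where
  "V L n = (INF A \<in> {A. swa_for A L}. space A n)"

end

theory Submission
  imports Defs "HOL-Real_Asymp.Real_Asymp" "HOL-Library.FuncSet" "HOL-Library.Nat_Bijection"
begin

(*
  A correct sliding window algorithm must reach different states after reading two windows
  of equal length that are not \<approx>\<^sub>L-equivalent, since some number of pops followed by some
  extension separates them; conversely, storing a binary code of the \<approx>\<^sub>L-class of the window
  is a correct algorithm.  Hence V\<^sub>L(n) and log |\<Sigma>\<^sup>\<le>\<^sup>n/\<approx>\<^sub>L| differ by O(log n), which
  gives (1) \<longleftrightarrow> (2).

  A critical tuple (u2, v2, u, v) yields 2\<^sup>m pairwise inequivalent words of length m(|u| + |v|),
  the concatenations of the blocks v u and u v.  Conversely, call P a loop at t if P t and t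
  induce the same transformation of a DFA for L.  Without critical tuples, two loops P, R of
  equal length at the same t have \<sim>\<^sub>L-equivalent suffixes P[i..]t and R[i..]t.  Cutting a word
  at its longest suffix that is a loop at the current context, the \<sim>\<^sub>L-classes of all its
  suffixes are determined by one letter and one length per element of the transition monoid,
  which gives polynomially many \<approx>\<^sub>L-classes.
*)

lemma card_image_le_if_factors:
  assumes "finite (f ` A)" and "\<And>x y. x \<in> A \<Longrightarrow> y \<in> A \<Longrightarrow> f x = f y \<Longrightarrow> g x = g y"
  shows "card (g ` A) \<le> card (f ` A)"
proof -
  have "g x = (g \<circ> inv_into A f) (f x)" if "x \<in> A" for x
  proof -
    have "inv_into A f (f x) \<in> A" "f (inv_into A f (f x)) = f x"
      using that by (simp_all add: inv_into_into f_inv_into_f)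
    then show ?thesis
      using assms(2) that by (metis comp_apply)
  qed
  then have "g ` A = (g \<circ> inv_into A f) ` f ` A"
    unfolding image_comp by (auto intro: image_cong)
  then show ?thesis
    using card_image_le[OF assms(1)] by simp
qed

lemma ex_idempotent_power:
  fixes f :: "nat \<Rightarrow> 'b"
  assumes "finite (range f)" and cong: "\<And>m n p. f m = f n \<Longrightarrow> f (m + p) = f (n + p)"
  shows "\<exists>k\<ge>1. f (k + k) = f k"
proof -
  have "\<not> inj f"
    using assms(1) finite_imageD infinite_UNIV_nat by blast
  then obtain a b where "a < b" "f a = f b"
    unfolding inj_def by (metis linorder_neq_iff)
  define p where "p = b - a"
  have period: "f (a + j) = f (a + j + t * p)" for j t
  proof (induction t)
    case (Suc t)
    have "f (a + (j + t * p)) = f (b + (j + t * p))"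
      using cong[OF \<open>f a = f b\<close>] .
    then show ?case
      using Suc \<open>a < b\<close> by (simp add: p_def add_ac)
  qed simp
  define k where "k = Suc a * p"
  have "1 \<le> p"
    using \<open>a < b\<close> by (simp add: p_def)
  then have "Suc a \<le> k"
    using mult_le_mono2[of 1 p "Suc a"] by (simp add: k_def)
  then have "a \<le> k" "1 \<le> k"
    by simp_all
  then have "f k = f (k + k)"
    using period[of "k - a" "Suc a"] by (simp add: k_def)
  then show ?thesis
    using \<open>1 \<le> k\<close> by metis
qed

lemma bigo_poly_mono:
  assumes "f \<in> O(\<lambda>n. real n ^ k)" "k \<le> k'"
  shows "f \<in> O(\<lambda>n. real n ^ k')"
proof -
  have "(\<lambda>n. real n ^ k) \<in> O(\<lambda>n. real n ^ k')"
    by (intro landau_o.big_power_increasing assms(2)) real_asymp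
  then show ?thesis
    using assms(1) landau_o.big_trans by blast
qed

lemma exp_bigo_poly_if_bigo_ln:
  fixes g :: "nat \<Rightarrow> nat"
  assumes "(\<lambda>n. real (g n)) \<in> O(\<lambda>n. ln (real n))"
  shows "\<exists>k. (\<lambda>n. 2 ^ g n) \<in> O(\<lambda>n. real n ^ k)"
proof -
  obtain c where c: "eventually (\<lambda>n. norm (real (g n)) \<le> c * norm (ln (real n))) at_top"
    using assms by (rule landau_o.bigE)
  define k where "k = nat \<lceil>c * ln 2\<rceil>"
  have "norm ((2::real) ^ g n) \<le> 1 * norm (real n ^ k)"
    if "norm (real (g n)) \<le> c * norm (ln (real n))" "1 \<le> n" for n
  proof -
    have "(2::real) ^ g n = 2 powr real (g n)"
      by (simp add: powr_realpow)
    also have "\<dots> \<le> 2 powr (c * ln (real n))"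
      using that by (intro powr_mono) auto
    also have "\<dots> = real n powr (c * ln 2)"
      using that by (simp add: powr_def)
    also have "\<dots> \<le> real n powr real k"
      using that unfolding k_def by (intro powr_mono) linarith+
    also have "\<dots> = real n ^ k"
      using that by (simp add: powr_realpow)
    finally show ?thesis
      by simp
  qed
  then have "(\<lambda>n. 2 ^ g n) \<in> O(\<lambda>n. real n ^ k)"
    by (intro bigoI[of _ 1] eventually_mono[OF eventually_conj[OF c eventually_ge_at_top[of 1]]])
      blast
  then show ?thesis ..
qed

lemma bigo_ln_if_exp_bigo_poly:
  fixes g :: "nat \<Rightarrow> nat"
  assumes "(\<lambda>n. 2 ^ g n) \<in> O(\<lambda>n. real n ^ k)"
  shows "(\<lambda>n. real (g n)) \<in> O(\<lambda>n. ln (real n))"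
proof -
  obtain C where "C > 0" and C: "eventually (\<lambda>n. norm ((2::real) ^ g n) \<le> C * norm (real n ^ k)) at_top"
    using assms by (rule landau_o.bigE)
  have "norm (real (g n)) \<le> 1 * norm (log 2 C + k * log 2 (real n))"
    if "norm ((2::real) ^ g n) \<le> C * norm (real n ^ k)" "1 \<le> n" for n
  proof -
    have "real (g n) = log 2 (2 ^ g n)"
      by (simp add: log_nat_power)
    also have "\<dots> \<le> log 2 (C * real n ^ k)"
      using that \<open>C > 0\<close> by (subst log_le_cancel_iff) auto
    also have "\<dots> = log 2 C + k * log 2 (real n)"
      using that \<open>C > 0\<close> by (simp add: log_mult log_nat_power)
    finally show ?thesis
      by simp
  qed
  then have "(\<lambda>n. real (g n)) \<in> O(\<lambda>n. log 2 C + k * log 2 (real n))"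
    by (intro bigoI[of _ 1] eventually_mono[OF eventually_conj[OF C eventually_ge_at_top[of 1]]])
      blast
  also have "(\<lambda>n. log 2 C + k * log 2 (real n)) \<in> O(\<lambda>n. ln (real n))"
    by real_asymp
  finally show ?thesis .
qed

section \<open>Suffix expansion of the Myhill--Nerode congruence\<close>

lemma equivp_MN: "equivp (MN L)"
  by (intro equivpI reflpI sympI transpI) (auto simp: MN_def)

lemmas MN_sym = equivp_symp[OF equivp_MN]
  and MN_trans = equivp_transp[OF equivp_MN]

lemma MN_append: "MN L x y \<Longrightarrow> MN L (x @ z) (y @ z)"
  by (simp add: MN_def)

lemma MN_eq_iff: "MN L x = MN L y \<longleftrightarrow> MN L x y"
  using equivp_MN unfolding equivp_def by metis

lemma equivp_suffix_exp:
  assumes "equivp R"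
  shows "equivp (suffix_exp R)"
proof (intro equivpI reflpI sympI transpI)
  show "suffix_exp R x x" for x
    using equivp_reflp[OF assms] by (simp add: suffix_exp_def)
  show "suffix_exp R y x" if "suffix_exp R x y" for x y
    using that equivp_symp[OF assms] by (simp add: suffix_exp_def)
  show "suffix_exp R x z" if "suffix_exp R x y" "suffix_exp R y z" for x y z
    using that equivp_transp[OF assms] unfolding suffix_exp_def by metis
qed

lemma suffix_exp_drop: "suffix_exp R x y \<Longrightarrow> suffix_exp R (drop k x) (drop k y)"
  by (simp add: suffix_exp_def add.commute)

lemma suffix_exp_MN_append:
  assumes "suffix_exp (MN L) x y"
  shows "suffix_exp (MN L) (x @ z) (y @ z)"
  using assms unfolding suffix_exp_def
proof (intro conjI allI impI)
  fix i assume "i < length (x @ z)"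
  then show "MN L (drop i (x @ z)) (drop i (y @ z))"
    using assms equivp_reflp[OF equivp_MN]
    by (cases "i < length x") (auto simp: suffix_exp_def intro: MN_append)
qed (simp add: suffix_exp_def)

lemma suffix_exp_MN_mem_iff:
  assumes "suffix_exp (MN L) x y"
  shows "x \<in> L \<longleftrightarrow> y \<in> L"
proof (cases "x = []")
  case False
  then have "MN L (drop 0 x) (drop 0 y)"
    using assms unfolding suffix_exp_def by blast
  then show ?thesis
    unfolding MN_def by (metis append_Nil2 drop0)
qed (use assms in \<open>simp add: suffix_exp_def\<close>)

definition approx_rel :: "'a list set \<Rightarrow> ('a list \<times> 'a list) set" where
  "approx_rel L = {(u, v). suffix_exp (MN L) u v}"

abbreviation approx_class :: "'a list set \<Rightarrow> 'a list \<Rightarrow> 'a list set" where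
  "approx_class L w \<equiv> approx_rel L `` {w}"

lemma approx_class_eq_iff: "approx_class L u = approx_class L v \<longleftrightarrow> suffix_exp (MN L) u v"
proof -
  have "equiv UNIV (approx_rel L)"
    using equivp_suffix_exp[OF equivp_MN] unfolding approx_rel_def equivp_def equiv_def
    by (auto simp: refl_on_def sym_def trans_def)
  from eq_equiv_class_iff[OF this UNIV_I UNIV_I] show ?thesis
    unfolding approx_rel_def by simp
qed

lemma approx_classes_eq: "approx_classes L n = approx_class L ` {w. length w \<le> n}"
  by (auto simp: approx_classes_def quotient_def approx_rel_def)

lemma finite_approx_classes: "finite (approx_classes (L :: 'a::finite list set) n)"
  unfolding approx_classes_eq using finite_lists_length_le[of "UNIV :: 'a set"] by simp

definition classes_len :: "'a list set \<Rightarrow> nat \<Rightarrow> 'a list set set" where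
  "classes_len L m = approx_class L ` {w. length w = m}"

lemma finite_classes_len: "finite (classes_len (L :: 'a::finite list set) m)"
  unfolding classes_len_def using finite_lists_length_eq[of "UNIV :: 'a set"] by simp

lemma classes_len_subset: "m \<le> n \<Longrightarrow> classes_len L m \<subseteq> approx_classes L n"
  unfolding classes_len_def approx_classes_eq by auto

lemma card_approx_classes_le_sum:
  "card (approx_classes (L :: 'a::finite list set) n) \<le> (\<Sum>m\<le>n. card (classes_len L m))"
proof -
  have "approx_classes L n = (\<Union>m\<le>n. classes_len L m)"
    unfolding approx_classes_eq classes_len_def by auto
  then show ?thesis
    by (simp add: card_UN_le)
qed

lemma card_approx_classes_le_mult:
  fixes L :: "'a::finite list set"
  assumes "\<And>m. m \<le> n \<Longrightarrow> card (classes_len L m) \<le> b"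
  shows "card (approx_classes L n) \<le> (n + 1) * b"
  using card_approx_classes_le_sum[of L n] sum_mono[of "{..n}" "\<lambda>m. card (classes_len L m)" "\<lambda>_. b"] assms
  by simp

section \<open>Critical tuples force exponentially many classes\<close>

lemma star2_left [simp]: "u \<in> star2 u v"
  unfolding star2_def by (auto intro: exI[of _ "[u]"])

lemma star2_right [simp]: "v \<in> star2 u v"
  unfolding star2_def by (auto intro: exI[of _ "[v]"])

lemma star2_Nil [simp]: "[] \<in> star2 u v"
  unfolding star2_def by (auto intro: exI[of _ "[]"])

lemma star2_append [intro]:
  assumes "x \<in> star2 u v" "y \<in> star2 u v"
  shows "x @ y \<in> star2 u v"
proof -
  obtain ws ws' where "x = concat ws" "set ws \<subseteq> {u, v}" "y = concat ws'" "set ws' \<subseteq> {u, v}"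
    using assms unfolding star2_def by blast
  then show ?thesis
    unfolding star2_def by (auto intro!: exI[of _ "ws @ ws'"])
qed

lemma star2_induct [consumes 1, case_names Nil left right]:
  assumes "w \<in> star2 u v" and "P []"
    and "\<And>w. P w \<Longrightarrow> P (u @ w)" and "\<And>w. P w \<Longrightarrow> P (v @ w)"
  shows "P w"
proof -
  obtain ws where "w = concat ws" "set ws \<subseteq> {u, v}"
    using assms(1) unfolding star2_def by blast
  then show ?thesis
    using assms(2-4) by (induction ws arbitrary: w) auto
qed

definition list_pow :: "'a list \<Rightarrow> nat \<Rightarrow> 'a list" where
  "list_pow x k = concat (replicate k x)"

lemma list_pow_0 [simp]: "list_pow x 0 = []"
  by (simp add: list_pow_def)

lemma list_pow_add: "list_pow x (m + n) = list_pow x m @ list_pow x n"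
  by (simp add: list_pow_def replicate_add)

lemma list_pow_Suc: "list_pow x (Suc n) = x @ list_pow x n"
  by (simp add: list_pow_def)

lemma list_pow_Suc': "list_pow x (Suc n) = list_pow x n @ x"
  using list_pow_add[of x n 1] by (simp add: list_pow_def)

lemma length_list_pow [simp]: "length (list_pow x n) = n * length x"
  by (induction n) (simp_all add: list_pow_Suc)

lemma list_pow_in_star2: "x \<in> star2 u v \<Longrightarrow> list_pow x n \<in> star2 u v"
  by (induction n) (auto simp: list_pow_Suc)

text \<open>The blocks \<open>v @ u\<close> and \<open>u @ v\<close> lie in \<open>star2 u v\<close>, have the same length and end in
  \<open>u2\<close> and \<open>v2\<close> respectively, so in the rightmost block where two such words differ
  the suffixes starting at \<open>u2\<close> resp. \<open>v2\<close> are not \<open>MN L\<close>-related.\<close>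
lemma critical_tuple_inj_concat:
  fixes bs cs :: "bool list"
  assumes crit: "critical_tuple (MN L) u2 v2 u v"
  defines "W \<equiv> \<lambda>bs. concat (map (\<lambda>b. if b then v @ u else u @ v) bs)"
  assumes "length bs = length cs" and "suffix_exp (MN L) (W bs) (W cs)"
  shows "bs = cs"
  using assms(3,4)
proof (induction bs arbitrary: cs)
  case (Cons b bs)
  then obtain c cs' where cs: "cs = c # cs'"
    by (cases cs) auto
  let ?X = "\<lambda>b. if b then v @ u else u @ v"
  have W_Cons: "W (b # bs) = ?X b @ W bs" for b bs
    by (simp add: W_def)
  have "suffix_exp (MN L) (drop (length u + length v) (W (b # bs))) (drop (length u + length v) (W cs))"
    using Cons.prems(2) by (rule suffix_exp_drop)
  then have "bs = cs'"
    using Cons cs by (simp add: W_Cons)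
  obtain u1 v1 where u: "u = u1 @ u2" and v: "v = v1 @ v2" and "length u2 = length v2" "0 < length u2"
    using crit unfolding critical_tuple_def by (metis One_nat_def Suc_le_eq)
  have "W bs \<in> star2 u v"
    unfolding W_def by (induction bs) (auto intro!: star2_append)
  then have not_MN: "\<not> MN L (u2 @ W bs) (v2 @ W bs)"
    using crit by (simp add: critical_tuple_def)
  define i where "i = length u + length v - length u2"
  have "i < length (W (b # bs))"
    using \<open>0 < length u2\<close> by (simp add: i_def W_Cons u v)
  then have "MN L (drop i (?X b @ W bs)) (drop i (?X c @ W bs))"
    using Cons.prems(2) \<open>bs = cs'\<close> unfolding cs suffix_exp_def W_Cons by blast
  moreover have "drop i (?X True @ W bs) = u2 @ W bs" "drop i (?X False @ W bs) = v2 @ W bs"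
    using \<open>length u2 = length v2\<close> by (simp_all add: i_def u v)
  ultimately have "b = c"
    using not_MN MN_sym by (cases b; cases c) auto
  with \<open>bs = cs'\<close> show ?case
    by (simp add: cs)
qed simp

lemma critical_tuple_card_approx_classes:
  fixes L :: "'a::finite list set"
  assumes "critical_tuple (MN L) u2 v2 u v"
  shows "2 ^ m \<le> card (approx_classes L (m * (length u + length v)))"
proof -
  define W where "W bs = concat (map (\<lambda>b. if b then v @ u else u @ v) bs)" for bs :: "bool list"
  have len_W: "length (W bs) = length bs * (length u + length v)" for bs
    unfolding W_def by (induction bs) simp_all
  have "inj_on (\<lambda>bs. approx_class L (W bs)) {bs. length bs = m}"
    using critical_tuple_inj_concat[OF assms] by (auto simp: inj_on_def approx_class_eq_iff W_def)
  then have "card {bs :: bool list. length bs = m} = card ((\<lambda>bs. approx_class L (W bs)) ` {bs. length bs = m})"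
    by (simp add: card_image)
  also have "\<dots> \<le> card (approx_classes L (m * (length u + length v)))"
    by (intro card_mono finite_approx_classes) (auto simp: approx_classes_eq len_W)
  finally show ?thesis
    using card_lists_length_eq[of "UNIV :: bool set" m] by simp
qed

lemma critical_tuple_not_poly:
  fixes L :: "'a::finite list set"
  assumes "critical_tuple (MN L) u2 v2 u v"
  shows "(\<lambda>n. real (card (approx_classes L n))) \<notin> O(\<lambda>n. real n ^ k)"
proof
  define l where "l = length u + length v"
  have "l > 0"
    using assms by (auto simp: critical_tuple_def l_def)
  assume "(\<lambda>n. real (card (approx_classes L n))) \<in> O(\<lambda>n. real n ^ k)"
  from landau_o.big.compose[OF this mult_nat_right_at_top[OF \<open>l > 0\<close>]]
  have "(\<lambda>m. real (card (approx_classes L (m * l)))) \<in> O(\<lambda>m. real l ^ k * real m ^ k)"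
    by (simp add: power_mult_distrib mult.commute)
  also have "(\<lambda>m. real l ^ k * real m ^ k) \<in> o(\<lambda>m. 2 ^ m)"
    by real_asymp
  finally have "(\<lambda>m. real (card (approx_classes L (m * l)))) \<in> o(\<lambda>m. 2 ^ m)" .
  moreover have "(\<lambda>m. 2 ^ m) \<in> O(\<lambda>m. real (card (approx_classes L (m * l))))"
    using critical_tuple_card_approx_classes[OF assms] unfolding l_def
    by (intro bigoI[of _ 1] always_eventually) (simp flip: of_nat_le_iff)
  ultimately have "eventually (\<lambda>m. (2::real) ^ m = 0) at_top"
    by (rule landau_o.big_small_asymmetric[rotated])
  then show False
    by simp
qed

section \<open>Without critical tuples there are polynomially many classes\<close>

abbreviation no_critical_tuple :: "'a list set \<Rightarrow> bool" where
  "no_critical_tuple L \<equiv> \<not> (\<exists>u2 v2 u v. critical_tuple (MN L) u2 v2 u v)"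

locale dfa =
  fixes L :: "'a::finite list set" and Q :: "nat set" and q0 :: nat
    and \<delta> :: "nat \<Rightarrow> 'a \<Rightarrow> nat" and F :: "nat set"
  assumes finite_Q: "finite Q" and q0_in_Q: "q0 \<in> Q" and \<delta>_in_Q: "q \<in> Q \<Longrightarrow> \<delta> q a \<in> Q"
    and lang: "w \<in> L \<longleftrightarrow> foldl \<delta> q0 w \<in> F"
begin

lemma foldl_in_Q: "q \<in> Q \<Longrightarrow> foldl \<delta> q w \<in> Q"
  by (induction w arbitrary: q) (simp_all add: \<delta>_in_Q)

definition transf :: "'a list \<Rightarrow> nat \<Rightarrow> nat" where
  "transf w = restrict (\<lambda>q. foldl \<delta> q w) Q"

lemma transf_eq_iff: "transf x = transf y \<longleftrightarrow> (\<forall>q\<in>Q. foldl \<delta> q x = foldl \<delta> q y)"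
  unfolding transf_def by (auto simp: fun_eq_iff restrict_def)

lemma transf_append_cong:
  assumes "transf x = transf x'" "transf y = transf y'"
  shows "transf (x @ y) = transf (x' @ y')"
  using assms foldl_in_Q unfolding transf_eq_iff by simp

lemma MN_if_transf_eq: "transf x = transf y \<Longrightarrow> MN L x y"
  using q0_in_Q by (simp add: MN_def lang transf_eq_iff)

lemma MN_prepend_if_transf_eq: "transf x = transf y \<Longrightarrow> MN L (z @ x) (z @ y)"
  by (rule MN_if_transf_eq) (rule transf_append_cong[OF refl])

lemma finite_range_transf: "finite (range transf)"
proof (rule finite_subset)
  show "range transf \<subseteq> Q \<rightarrow>\<^sub>E Q"
    using foldl_in_Q by (auto simp: transf_def)
  show "finite (Q \<rightarrow>\<^sub>E Q)"
    by (intro finite_PiE finite_Q)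
qed

lemma ex_common_idempotent_power:
  "\<exists>k\<ge>1. transf (list_pow x (k + k)) = transf (list_pow x k)
       \<and> transf (list_pow y (k + k)) = transf (list_pow y k)"
proof -
  let ?f = "\<lambda>k. (transf (list_pow x k), transf (list_pow y k))"
  have "range ?f \<subseteq> range transf \<times> range transf"
    by blast
  then have "finite (range ?f)"
    using finite_subset finite_range_transf by blast
  moreover have "?f (m + p) = ?f (n + p)" if "?f m = ?f n" for m n p
  proof -
    have "transf (list_pow x m @ list_pow x p) = transf (list_pow x n @ list_pow x p)"
         "transf (list_pow y m @ list_pow y p) = transf (list_pow y n @ list_pow y p)"
      using that by (auto intro: transf_append_cong)
    then show ?thesis
      by (simp add: list_pow_add)
  qed
  ultimately obtain k where "k \<ge> 1" "?f (k + k) = ?f k"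
    using ex_idempotent_power[of ?f] by blast
  then show ?thesis
    by auto
qed

lemma transf_absorb_left:
  assumes "w \<in> star2 u v" "transf (u @ t) = transf t" "transf (v @ t) = transf t"
  shows "transf (w @ t) = transf t"
  using assms(1)
proof (induction rule: star2_induct)
  case (left w)
  have "transf (u @ w @ t) = transf (u @ t)"
    using transf_append_cong[OF refl left] by simp
  then show ?case
    using assms(2) by simp
next
  case (right w)
  have "transf (v @ w @ t) = transf (v @ t)"
    using transf_append_cong[OF refl right] by simp
  then show ?case
    using assms(3) by simp
qed simp

lemma transf_absorb_right:
  assumes "w \<in> star2 u v" "transf (t @ u) = transf t" "transf (t @ v) = transf t"
  shows "transf (t @ w) = transf t"
  using assms(1)
proof (induction rule: star2_induct)
  case (left w)
  have "transf ((t @ u) @ w) = transf (t @ w)"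
    using transf_append_cong[OF assms(2) refl] .
  then show ?case
    using left by simp
next
  case (right w)
  have "transf ((t @ v) @ w) = transf (t @ w)"
    using transf_append_cong[OF assms(3) refl] .
  then show ?case
    using right by simp
qed simp

text \<open>The tuple \<open>(drop i P @ T, drop i R @ T, P @ T, R @ T)\<close> is not critical, and \<open>T\<close>
  absorbs every word of \<open>star2 (P @ T) (R @ T)\<close> from the right.\<close>
lemma MN_drop_append_idempotent:
  assumes nc: "no_critical_tuple L"
    and T: "transf (T @ T) = transf T"
    and P: "transf (P @ T) = transf T" and R: "transf (R @ T) = transf T"
    and "length P = length R" "i < length P"
  shows "MN L (drop i P @ T) (drop i R @ T)"
proof -
  have "\<not> critical_tuple (MN L) (drop i P @ T) (drop i R @ T) (P @ T) (R @ T)"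
    using nc by blast
  then obtain w where w: "w \<in> star2 (P @ T) (R @ T)" and MN_w: "MN L (drop i P @ T @ w) (drop i R @ T @ w)"
    using assms(5,6) append_take_drop_id[of i P, symmetric] append_take_drop_id[of i R, symmetric]
    unfolding critical_tuple_def by (auto simp del: append_take_drop_id)
  have "transf (T @ P @ T) = transf T" "transf (T @ R @ T) = transf T"
    using transf_append_cong[OF refl P, of T] transf_append_cong[OF refl R, of T] T by simp_all
  then have "transf (T @ w) = transf T"
    using transf_absorb_right[OF w] by simp
  then have "MN L (X @ T @ w) (X @ T)" for X
    by (rule MN_prepend_if_transf_eq)
  then show ?thesis
    using MN_w MN_sym MN_trans by metis
qed

definition rank :: "'a list \<Rightarrow> nat" where
  "rank w = card (transf w ` Q)"

lemma transf_image_append_subset: "transf (x @ y) ` Q \<subseteq> transf y ` Q"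
  using foldl_in_Q by (auto simp: transf_def)

lemma transf_eq_if_idempotent_rank_le:
  assumes E: "transf (E @ E) = transf E" and G: "transf (G @ G) = transf G"
    and G_left: "G = E @ G'" and G_right: "G = G'' @ E" and "rank E \<le> rank G"
  shows "transf G = transf E"
  unfolding transf_eq_iff
proof
  fix q assume "q \<in> Q"
  define p where "p = foldl \<delta> q E"
  have "transf G ` Q \<subseteq> transf E ` Q"
    using transf_image_append_subset G_right by metis
  then have "transf G ` Q = transf E ` Q"
    using \<open>rank E \<le> rank G\<close> finite_Q unfolding rank_def by (intro card_seteq) auto
  moreover have "transf E q = p"
    using \<open>q \<in> Q\<close> by (simp add: transf_def p_def)
  ultimately obtain q' where "q' \<in> Q" "p = foldl \<delta> q' G"
    using \<open>q \<in> Q\<close> by (force simp: transf_def)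
  then have p_G: "foldl \<delta> p G = p"
    using G unfolding transf_eq_iff by (metis foldl_append)
  have p_E: "foldl \<delta> p E = p"
    using E \<open>q \<in> Q\<close> unfolding transf_eq_iff p_def by (metis foldl_append)
  have "foldl \<delta> q G = foldl \<delta> p G'"
    by (simp add: G_left p_def)
  also have "\<dots> = foldl \<delta> p G"
    by (simp add: G_left p_E)
  finally show "foldl \<delta> q G = foldl \<delta> q E"
    using p_G p_def by simp
qed

text \<open>The power begins and ends with \<open>E\<close>, so its image is that of \<open>E\<close> by minimality of
  the rank, and an idempotent acts as the identity on its image.\<close>
lemma transf_idempotent_power_sandwich:
  assumes E: "E \<in> star2 P R" "transf (E @ E) = transf E"
    and E_min: "\<And>G. G \<in> star2 P R \<Longrightarrow> transf (G @ G) = transf G \<Longrightarrow> rank E \<le> rank G"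
    and W: "W \<in> star2 P R" and K: "K = Suc K'"
    and idem: "transf (list_pow (E @ W @ E) (K + K)) = transf (list_pow (E @ W @ E) K)"
  shows "transf (list_pow (E @ W @ E) K) = transf E"
proof -
  let ?G = "list_pow (E @ W @ E) K"
  have "?G \<in> star2 P R"
    using E(1) W by (auto intro!: star2_append list_pow_in_star2)
  moreover have "transf (?G @ ?G) = transf ?G"
    using idem by (simp add: list_pow_add)
  moreover have "?G = E @ (W @ E @ list_pow (E @ W @ E) K')"
    by (simp add: K list_pow_Suc)
  moreover have "?G = (list_pow (E @ W @ E) K' @ E @ W) @ E"
    by (simp add: K list_pow_Suc')
  ultimately show ?thesis
    using transf_eq_if_idempotent_rank_le[OF E(2)] E_min by blast
qed

text \<open>For an idempotent \<open>E\<close> of minimal rank in \<open>star2 P R\<close>, the idempotent powers of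
  \<open>E @ P @ E\<close> and \<open>E @ R @ E\<close> reduce the claim to the idempotent case \<open>T = E\<close>, because
  every word of \<open>star2 P R\<close> is a loop at \<open>t\<close>.\<close>
lemma MN_drop_append_loops:
  assumes nc: "no_critical_tuple L"
    and P: "transf (P @ t) = transf t" and R: "transf (R @ t) = transf t"
    and len: "length P = length R" and "i < length P"
  shows "MN L (drop i P @ t) (drop i R @ t)"
proof -
  let ?S = "star2 P R"
  obtain E where E: "E \<in> ?S" "transf (E @ E) = transf E"
    and E_min: "\<And>G. G \<in> ?S \<Longrightarrow> transf (G @ G) = transf G \<Longrightarrow> rank E \<le> rank G"
    using ex_has_least_nat[of "\<lambda>E. E \<in> ?S \<and> transf (E @ E) = transf E" "[]" rank] by auto
  define X where "X = E @ P @ E"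
  define Y where "Y = E @ R @ E"
  obtain K where "K \<ge> 1" and X_idem: "transf (list_pow X (K + K)) = transf (list_pow X K)"
    and Y_idem: "transf (list_pow Y (K + K)) = transf (list_pow Y K)"
    using ex_common_idempotent_power by blast
  then obtain K' where K: "K = Suc K'"
    using not0_implies_Suc by fastforce
  define G where "G = list_pow X K"
  define H where "H = list_pow Y K"
  have "transf G = transf E" "transf H = transf E"
    using transf_idempotent_power_sandwich[OF E E_min _ K] X_idem Y_idem
    by (simp_all add: G_def H_def X_def Y_def)
  then have "transf (G @ E) = transf E" "transf (H @ E) = transf E"
    using transf_append_cong[OF _ refl, of _ E E] E(2) by simp_all
  moreover have "length G = length H" "length E + i < length G"
    using len \<open>i < length P\<close> by (simp_all add: G_def H_def K X_def Y_def)
  ultimately have "MN L (drop (length E + i) G @ E) (drop (length E + i) H @ E)"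
    by (rule MN_drop_append_idempotent[OF nc E(2)])
  moreover have "drop (length E + i) G = drop i P @ E @ list_pow X K'"
    "drop (length E + i) H = drop i R @ E @ list_pow Y K'"
    using \<open>i < length P\<close> len by (simp_all add: G_def H_def K X_def Y_def list_pow_Suc)
  ultimately have "MN L (drop i P @ E @ list_pow X K' @ E) (drop i R @ E @ list_pow Y K' @ E)"
    by simp
  from MN_append[OF this, of t]
  have mid: "MN L (drop i P @ (E @ list_pow X K' @ E) @ t) (drop i R @ (E @ list_pow Y K' @ E) @ t)"
    by simp
  have "E @ list_pow X K' @ E \<in> ?S" "E @ list_pow Y K' @ E \<in> ?S"
    using E(1) by (auto simp: X_def Y_def intro!: star2_append list_pow_in_star2)
  then have "transf ((E @ list_pow X K' @ E) @ t) = transf t"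
    "transf ((E @ list_pow Y K' @ E) @ t) = transf t"
    using transf_absorb_left[OF _ P R] by blast+
  then have "MN L (drop i P @ t) (drop i P @ (E @ list_pow X K' @ E) @ t)"
    "MN L (drop i R @ (E @ list_pow Y K' @ E) @ t) (drop i R @ t)"
    by (simp_all add: MN_prepend_if_transf_eq)
  with mid show ?thesis
    using MN_trans by blast
qed

definition profile :: "'a list \<Rightarrow> 'a list \<Rightarrow> ('a list \<Rightarrow> bool) list" where
  "profile t x = map (\<lambda>i. MN L (drop i x @ t)) [0..<length x]"

lemma length_profile [simp]: "length (profile t x) = length x"
  by (simp add: profile_def)

lemma nth_profile: "i < length x \<Longrightarrow> profile t x ! i = MN L (drop i x @ t)"
  by (simp add: profile_def)

lemma profile_append: "profile t (x @ y) = profile (y @ t) x @ profile t y"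
  by (rule nth_equalityI) (auto simp: nth_profile nth_append)

lemma profile_cong: "transf t = transf t' \<Longrightarrow> profile t x = profile t' x"
  by (simp add: profile_def MN_eq_iff MN_prepend_if_transf_eq)

lemma suffix_exp_if_profile_eq:
  assumes "length x = length y" "profile [] x = profile [] y"
  shows "suffix_exp (MN L) x y"
  unfolding suffix_exp_def
proof (intro conjI allI impI)
  fix i assume "i < length x"
  then show "MN L (drop i x) (drop i y)"
    using assms nth_profile[of i x "[]"] nth_profile[of i y "[]"] by (simp add: MN_eq_iff MN_sym)
qed (fact assms(1))

lemma finite_range_MN: "finite (range (MN L))"
proof -
  define lang_from where "lang_from q = {z. foldl \<delta> q z \<in> F}" for q
  have "MN L x = (\<lambda>y. lang_from (foldl \<delta> q0 x) = lang_from (foldl \<delta> q0 y))" for x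
    by (auto simp: fun_eq_iff MN_def lang lang_from_def)
  then have "range (MN L) \<subseteq> (\<lambda>q y. lang_from q = lang_from (foldl \<delta> q0 y)) ` Q"
    using foldl_in_Q[OF q0_in_Q] by auto
  then show ?thesis
    using finite_Q finite_surj by blast
qed

definition suffix_transfs :: "'a list \<Rightarrow> 'a list \<Rightarrow> (nat \<Rightarrow> nat) set" where
  "suffix_transfs t x = (\<lambda>i. transf (drop i x @ t)) ` {0..length x}"

definition profiles :: "'a list \<Rightarrow> nat \<Rightarrow> (nat \<Rightarrow> nat) set \<Rightarrow> ('a list \<Rightarrow> bool) list set" where
  "profiles t n T = {profile t x | x. length x = n \<and> suffix_transfs t x \<subseteq> T}"

definition loop_profile :: "'a list \<Rightarrow> nat \<Rightarrow> ('a list \<Rightarrow> bool) list" where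
  "loop_profile t l = profile t (SOME P. length P = l \<and> transf (P @ t) = transf t)"

lemma finite_profiles: "finite (profiles t n T)"
proof (rule finite_subset)
  show "profiles t n T \<subseteq> {p. set p \<subseteq> range (MN L) \<and> length p = n}"
    by (auto simp: profiles_def profile_def)
  show "finite {p. set p \<subseteq> range (MN L) \<and> length p = n}"
    using finite_lists_length_eq[OF finite_range_MN] .
qed

lemma profiles_empty: "transf t \<notin> T \<Longrightarrow> profiles t n T = {}"
  by (force simp: profiles_def suffix_transfs_def)

lemma profile_loop:
  assumes nc: "no_critical_tuple L" and P: "transf (P @ t) = transf t"
  shows "profile t P = loop_profile t (length P)"
proof -
  define R where "R = (SOME R. length R = length P \<and> transf (R @ t) = transf t)"
  have R: "length R = length P" "transf (R @ t) = transf t"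
    using someI[of "\<lambda>R. length R = length P \<and> transf (R @ t) = transf t" P] P by (simp_all add: R_def)
  have "profile t P ! i = profile t R ! i" if "i < length P" for i
    using MN_drop_append_loops[OF nc P R(2) R(1)[symmetric] that] that R(1)
    by (simp add: nth_profile MN_eq_iff)
  then show ?thesis
    unfolding loop_profile_def R_def[symmetric] using R(1) by (intro nth_equalityI) simp_all
qed

lemma profile_append_loop:
  assumes nc: "no_critical_tuple L" and P: "transf (P @ t) = transf t"
  shows "profile t (y @ a # P) = profile (a # t) y @ MN L (a # t) # loop_profile t (length P)"
proof -
  have aP: "transf (a # P @ t) = transf (a # t)"
    using transf_append_cong[OF refl P, of "[a]"] by simp
  then have "profile (P @ t) [a] = [MN L (a # t)]"
    using MN_if_transf_eq[OF aP] by (simp add: profile_def MN_eq_iff)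
  then show ?thesis
    using profile_cong[OF aP] profile_loop[OF nc P] profile_append[of t y "a # P"]
      profile_append[of t "[a]" P] by simp
qed

lemma suffix_transfs_before_loop:
  assumes "transf (P @ t) = transf t"
  shows "suffix_transfs (a # t) y = (\<lambda>j. transf (drop j (y @ a # P) @ t)) ` {0..<Suc (length y)}"
proof -
  have "transf (drop j y @ a # t) = transf (drop j (y @ a # P) @ t)" if "j \<le> length y" for j
    using transf_append_cong[OF refl assms, of "drop j y @ [a]"] that by simp
  then show ?thesis
    unfolding suffix_transfs_def atLeastLessThanSuc_atLeastAtMost by (auto intro: image_cong)
qed

text \<open>Cut \<open>x\<close> in front of its longest suffix that is a loop at \<open>t\<close>; the part before the
  letter \<open>a\<close> in front of it never again sees the transformation of \<open>t\<close>.\<close>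
lemma profiles_subset:
  assumes nc: "no_critical_tuple L"
  shows "profiles t n T \<subseteq> insert (loop_profile t n)
    (\<Union>a. \<Union>l<n. (\<lambda>p. p @ MN L (a # t) # loop_profile t l) ` profiles (a # t) (n - Suc l) (T - {transf t}))"
proof
  fix p assume "p \<in> profiles t n T"
  then obtain x where p: "p = profile t x" and "length x = n" and x_T: "suffix_transfs t x \<subseteq> T"
    by (auto simp: profiles_def)
  define i where "i = (LEAST i. transf (drop i x @ t) = transf t)"
  have loop: "transf (drop i x @ t) = transf t" and "i \<le> length x"
    using LeastI[of "\<lambda>i. transf (drop i x @ t) = transf t" "length x"]
      Least_le[of "\<lambda>i. transf (drop i x @ t) = transf t" "length x"]
    by (simp_all add: i_def)
  have i_min: "transf (drop j x @ t) \<noteq> transf t" if "j < i" for j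
    using not_less_Least[OF that[unfolded i_def]] .
  show "p \<in> insert (loop_profile t n)
    (\<Union>a. \<Union>l<n. (\<lambda>p. p @ MN L (a # t) # loop_profile t l) ` profiles (a # t) (n - Suc l) (T - {transf t}))"
  proof (cases i)
    case 0
    then show ?thesis
      using profile_loop[OF nc] loop p \<open>length x = n\<close> by simp
  next
    case (Suc k)
    define y a P where "y = take k x" and "a = x ! k" and "P = drop i x"
    have x: "x = y @ a # P"
      using \<open>i \<le> length x\<close> id_take_nth_drop[of k x] by (simp add: Suc y_def a_def P_def)
    have "length y = k"
      using \<open>i \<le> length x\<close> by (simp add: Suc y_def)
    have P: "transf (P @ t) = transf t"
      using loop by (simp add: P_def)
    have "suffix_transfs (a # t) y = (\<lambda>j. transf (drop j x @ t)) ` {0..<i}"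
      using suffix_transfs_before_loop[OF P, of a y] \<open>length y = k\<close> Suc by (simp add: x)
    also have "\<dots> \<subseteq> T - {transf t}"
      using x_T i_min \<open>i \<le> length x\<close> unfolding suffix_transfs_def by force
    finally have "suffix_transfs (a # t) y \<subseteq> T - {transf t}" .
    moreover have "length y = n - Suc (length P)" "length P < n"
      using \<open>length x = n\<close> by (simp_all add: x)
    ultimately have "profile (a # t) y \<in> profiles (a # t) (n - Suc (length P)) (T - {transf t})"
      unfolding profiles_def by blast
    moreover have "p = profile (a # t) y @ MN L (a # t) # loop_profile t (length P)"
      using p profile_append_loop[OF nc P] by (simp add: x)
    ultimately show ?thesis
      using \<open>length P < n\<close> by blast
  qed
qed

lemma card_profiles_le_sum:
  assumes nc: "no_critical_tuple L"
  shows "card (profiles t m T)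
    \<le> Suc (\<Sum>a\<in>UNIV. \<Sum>l<m. card (profiles (a # t) (m - Suc l) (T - {transf t})))"
proof -
  let ?f = "\<lambda>a l p. p @ MN L (a # t) # loop_profile t l"
  let ?U = "\<Union>a. \<Union>l<m. ?f a l ` profiles (a # t) (m - Suc l) (T - {transf t})"
  have "card ?U \<le> (\<Sum>a\<in>UNIV. \<Sum>l<m. card (?f a l ` profiles (a # t) (m - Suc l) (T - {transf t})))"
    by (rule order_trans[OF card_UN_le sum_mono[OF card_UN_le]]) simp_all
  also have "\<dots> \<le> (\<Sum>a\<in>UNIV. \<Sum>l<m. card (profiles (a # t) (m - Suc l) (T - {transf t})))"
    by (intro sum_mono card_image_le finite_profiles)
  finally have card_U: "card ?U \<le> \<dots>" .
  have "card (profiles t m T) \<le> card (insert (loop_profile t m) ?U)"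
    by (intro card_mono profiles_subset[OF nc]) (simp add: finite_profiles)
  also have "\<dots> \<le> Suc (card ?U)"
    by (simp add: card_insert_if finite_profiles)
  finally show ?thesis
    using card_U by simp
qed

lemma card_profiles_le:
  assumes nc: "no_critical_tuple L" and "finite T" and "m \<le> n"
  shows "card (profiles t m T) \<le> (card (UNIV :: 'a set) * (n + 1) + 1) ^ card T"
  using assms(2,3)
proof (induction "card T" arbitrary: T t m)
  case 0
  then show ?case
    using profiles_empty by simp
next
  case (Suc k)
  let ?s = "card (UNIV :: 'a set)"
  let ?B = "(?s * (n + 1) + 1) ^ k"
  show ?case
  proof (cases "transf t \<in> T")
    case False
    then show ?thesis
      using profiles_empty by simp
  next
    case True
    have IH: "card (profiles t' m' (T - {transf t})) \<le> ?B" if "m' \<le> n" for t' m'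
      using Suc.hyps(1)[of "T - {transf t}" m' t'] Suc.hyps(2)[symmetric] Suc.prems(1) True that
      by simp
    have "card (profiles t m T)
        \<le> Suc (\<Sum>a\<in>UNIV. \<Sum>l<m. card (profiles (a # t) (m - Suc l) (T - {transf t})))"
      by (rule card_profiles_le_sum[OF nc])
    also have "\<dots> \<le> Suc (\<Sum>a\<in>(UNIV :: 'a set). \<Sum>l<m. ?B)"
      by (intro Suc_le_mono[THEN iffD2] sum_mono IH) (use Suc.prems(2) in simp)
    also have "\<dots> = Suc (?s * m * ?B)"
      by simp
    also have "\<dots> \<le> (?s * (n + 1) + 1) * ?B"
    proof -
      have "?s * m * ?B \<le> ?s * n * ?B"
        using Suc.prems(2) by (intro mult_le_mono) simp_all
      moreover have "(?s * (n + 1) + 1) * ?B = ?s * n * ?B + ?s * ?B + ?B" "0 < ?B"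
        by (simp_all add: algebra_simps)
      ultimately show ?thesis
        by linarith
    qed
    also have "\<dots> = (?s * (n + 1) + 1) ^ card T"
      by (simp flip: Suc.hyps(2))
    finally show ?thesis .
  qed
qed

lemma card_classes_len_le:
  assumes nc: "no_critical_tuple L" and "m \<le> n"
  shows "card (classes_len L m) \<le> (card (UNIV :: 'a set) * (n + 1) + 1) ^ card (range transf)"
proof -
  have sub: "profile [] ` {w. length w = m} \<subseteq> profiles [] m (range transf)"
    by (auto simp: profiles_def suffix_transfs_def)
  have "approx_class L x = approx_class L y"
    if "x \<in> {w. length w = m}" "y \<in> {w. length w = m}" "profile [] x = profile [] y" for x y
    using that by (simp add: approx_class_eq_iff suffix_exp_if_profile_eq)
  then have "card (classes_len L m) \<le> card (profile [] ` {w. length w = m})"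
    unfolding classes_len_def
    by (intro card_image_le_if_factors finite_subset[OF sub finite_profiles])
  also have "\<dots> \<le> card (profiles [] m (range transf))"
    by (intro card_mono finite_profiles sub)
  also have "\<dots> \<le> (card (UNIV :: 'a set) * (n + 1) + 1) ^ card (range transf)"
    by (rule card_profiles_le[OF nc finite_range_transf \<open>m \<le> n\<close>])
  finally show ?thesis .
qed

lemma no_critical_tuple_poly:
  assumes "no_critical_tuple L"
  shows "\<exists>k. (\<lambda>n. real (card (approx_classes L n))) \<in> O(\<lambda>n. real n ^ k)"
proof -
  let ?s = "card (UNIV :: 'a set)" and ?K = "card (range transf)"
  have "real (card (approx_classes L n)) \<le> (real n + 1) * (?s * (real n + 1) + 1) ^ ?K" for n
  proof -
    have "card (approx_classes L n) \<le> (n + 1) * (?s * (n + 1) + 1) ^ ?K"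
      using card_classes_len_le[OF assms] by (rule card_approx_classes_le_mult)
    then have "real (card (approx_classes L n)) \<le> real ((n + 1) * (?s * (n + 1) + 1) ^ ?K)"
      by (simp only: of_nat_le_iff)
    then show ?thesis
      by (simp only: of_nat_mult of_nat_add of_nat_1 of_nat_power)
  qed
  then have "(\<lambda>n. real (card (approx_classes L n)))
      \<in> O(\<lambda>n. (real n + 1) * (?s * (real n + 1) + 1) ^ ?K)"
    by (intro bigoI[of _ 1] always_eventually allI) simp
  also have "(\<lambda>n. (real n + 1) * (?s * (real n + 1) + 1) ^ ?K) \<in> O(\<lambda>n. real n * real n ^ ?K)"
    by (intro landau_o.big.mult landau_o.big_power) real_asymp+
  finally show ?thesis
    by (auto simp flip: power_Suc)
qed

end

section \<open>Space complexity of sliding window algorithms\<close>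

lemma foldl_wstep_Sym: "foldl wstep w (map Sym x) = w @ x"
  by (induction x arbitrary: w) simp_all

lemma foldl_wstep_Pop: "foldl wstep w (replicate i Pop) = drop i w"
  by (induction i arbitrary: w) (simp_all add: drop_Suc tl_drop)

lemma wnd_map_Sym [simp]: "wnd (map Sym x) = x"
  by (simp add: wnd_def foldl_wstep_Sym)

text \<open>After \<open>i\<close> pops and the symbols of \<open>z\<close>, the windows are \<open>drop i x @ z\<close> and
  \<open>drop i y @ z\<close>.\<close>
lemma suffix_exp_if_run_eq:
  assumes A: "swa_for A L" and "length x = length y"
    and run: "run A (map Sym x) = run A (map Sym y)"
  shows "suffix_exp (MN L) x y"
  unfolding suffix_exp_def
proof (intro conjI allI impI)
  fix i
  show "MN L (drop i x) (drop i y)"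
    unfolding MN_def
  proof
    fix z :: "'a list"
    let ?v = "replicate i Pop @ map Sym z"
    have "run A (map Sym x @ ?v) = run A (map Sym y @ ?v)"
      using run by (simp add: run_def split: prod.splits)
    then have "wnd (map Sym x @ ?v) \<in> L \<longleftrightarrow> wnd (map Sym y @ ?v) \<in> L"
      using A unfolding swa_for_def by metis
    then show "drop i x @ z \<in> L \<longleftrightarrow> drop i y @ z \<in> L"
      by (simp add: wnd_def foldl_wstep_Sym foldl_wstep_Pop)
  qed
qed (fact assms(2))

lemma length_run_le_space:
  assumes "length x \<le> n"
  shows "enat (length (run A (map Sym x))) \<le> space A n"
  unfolding space_def using assms by (intro SUP_upper) (simp add: take_map)

lemma card_bool_lists_le: "card {bs :: bool list. length bs \<le> v} \<le> 2 ^ Suc v"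
proof -
  have "(\<Sum>i\<le>v. (2::nat) ^ i) < 2 ^ Suc v"
    by (induction v) simp_all
  then show ?thesis
    using card_lists_length_le[of "UNIV :: bool set" v] by simp
qed

lemma card_classes_len_le_space:
  fixes L :: "'a::finite list set"
  assumes A: "swa_for A L" and "space A n \<le> enat v" and "m \<le> n"
  shows "card (classes_len L m) \<le> 2 ^ Suc v"
proof -
  let ?state = "\<lambda>x. run A (map Sym x)"
  have fin: "finite {bs :: bool list. length bs \<le> v}"
    using finite_lists_length_le[of "UNIV :: bool set" v] by simp
  have states: "?state ` {w. length w = m} \<subseteq> {bs. length bs \<le> v}"
  proof (rule image_subsetI)
    fix x :: "'a list" assume "x \<in> {w. length w = m}"
    then have "enat (length (?state x)) \<le> space A n"
      using \<open>m \<le> n\<close> by (intro length_run_le_space) simp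
    also have "\<dots> \<le> enat v"
      by (fact assms(2))
    finally show "?state x \<in> {bs. length bs \<le> v}"
      by simp
  qed
  have "approx_class L x = approx_class L y"
    if "x \<in> {w. length w = m}" "y \<in> {w. length w = m}" "?state x = ?state y" for x y
    using that by (simp add: approx_class_eq_iff suffix_exp_if_run_eq[OF A])
  then have "card (classes_len L m) \<le> card (?state ` {w. length w = m})"
    unfolding classes_len_def by (intro card_image_le_if_factors finite_subset[OF states fin])
  also have "\<dots> \<le> card {bs :: bool list. length bs \<le> v}"
    by (intro card_mono states fin)
  also have "\<dots> \<le> 2 ^ Suc v"
    by (rule card_bool_lists_le)
  finally show ?thesis .
qed

lemma V_attained:
  assumes "V L n \<noteq> \<infinity>"
  obtains A where "swa_for A L" "space A n = V L n"
proof -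
  let ?S = "(\<lambda>A. space A n) ` {A. swa_for A L}"
  have "?S \<noteq> {}"
  proof
    assume "?S = {}"
    then have "V L n = Inf {}"
      unfolding V_def by (rule arg_cong)
    with assms show False
      by (simp add: top_enat_def)
  qed
  then have "Inf ?S \<in> ?S"
    unfolding Inf_enat_def by (auto intro: LeastI)
  then show ?thesis
    using that unfolding V_def by auto
qed

lemma card_approx_classes_le_V:
  fixes L :: "'a::finite list set"
  assumes "V L n = enat v"
  shows "card (approx_classes L n) \<le> (n + 1) * 2 ^ Suc v"
proof -
  obtain A where "swa_for A L" "space A n = enat v"
    using V_attained[of L n] assms by auto
  then show ?thesis
    by (intro card_approx_classes_le_mult card_classes_len_le_space) auto
qed

fun bits :: "nat \<Rightarrow> bool list" where
  "bits n = (if n = 0 then [] else odd n # bits (n div 2))"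

declare bits.simps [simp del]

lemma bits_0 [simp]: "bits 0 = []"
  by (simp add: bits.simps)

lemma inj_bits: "inj bits"
proof (rule injI)
  show "m = n" if "bits m = bits n" for m n
    using that
  proof (induction m arbitrary: n rule: bits.induct)
    case (1 m)
    show ?case
    proof (cases "m = 0 \<or> n = 0")
      case True
      then show ?thesis
        using "1.prems" bits.simps[of m] bits.simps[of n] by (auto split: if_splits)
    next
      case False
      then have "odd m = odd n" "bits (m div 2) = bits (n div 2)"
        using "1.prems" bits.simps[of m] bits.simps[of n] by simp_all
      then have "odd m = odd n" "m div 2 = n div 2"
        using "1.IH" False by blast+
      then show ?thesis
        by (metis div_mult_mod_eq odd_iff_mod_2_eq_one parity_cases)
    qed
  qed
qed

lemma two_pow_length_bits_le: "0 < n \<Longrightarrow> 2 ^ length (bits n) \<le> 2 * n"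
proof (induction n rule: bits.induct)
  case (1 n)
  then show ?case
    using bits.simps[of n] by (cases "n div 2 = 0") auto
qed

definition enum_classes :: "'a list set \<Rightarrow> nat \<Rightarrow> 'a list set \<Rightarrow> nat" where
  "enum_classes L m = (SOME h. bij_betw h (classes_len L m) {0..<card (classes_len L m)})"

lemma bij_betw_enum_classes:
  "bij_betw (enum_classes L m) (classes_len (L :: 'a::finite list set) m) {0..<card (classes_len L m)}"
  unfolding enum_classes_def by (rule someI_ex[OF ex_bij_betw_finite_nat[OF finite_classes_len]])

definition class_code :: "'a list set \<Rightarrow> 'a list \<Rightarrow> bool list" where
  "class_code L w = bits (prod_encode (length w, enum_classes L (length w) (approx_class L w)))"

lemma class_code_eq_iff:
  fixes L :: "'a::finite list set"
  shows "class_code L w = class_code L w' \<longleftrightarrow> suffix_exp (MN L) w w'"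
proof
  assume "class_code L w = class_code L w'"
  then have "length w = length w'"
    and "enum_classes L (length w) (approx_class L w) = enum_classes L (length w) (approx_class L w')"
    using inj_bits by (auto simp: class_code_def inj_eq prod_encode_eq)
  moreover have "approx_class L w \<in> classes_len L (length w)" "approx_class L w' \<in> classes_len L (length w)"
    using \<open>length w = length w'\<close> by (auto simp: classes_len_def)
  ultimately have "approx_class L w = approx_class L w'"
    using bij_betw_enum_classes[of L "length w"] by (auto dest: bij_betw_imp_inj_on inj_onD)
  then show "suffix_exp (MN L) w w'"
    by (simp add: approx_class_eq_iff)
next
  assume "suffix_exp (MN L) w w'"
  then show "class_code L w = class_code L w'"
    using approx_class_eq_iff[of L w w'] by (simp add: class_code_def suffix_exp_def)
qed

lemma two_pow_length_class_code_le:
  fixes L :: "'a::finite list set"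
  assumes "length w \<le> n"
  shows "2 ^ length (class_code L w) \<le> 2 * (n + card (approx_classes L n) + 1) ^ 2"
proof -
  let ?c = "card (approx_classes L n)"
  let ?i = "enum_classes L (length w) (approx_class L w)"
  have "?i < card (classes_len L (length w))"
    using bij_betw_apply[OF bij_betw_enum_classes] by (auto simp: classes_len_def)
  also have "\<dots> \<le> ?c"
    using assms by (intro card_mono finite_approx_classes classes_len_subset)
  finally have "?i < ?c" .
  have "prod_encode (length w, ?i) = triangle (length w + ?i) + length w"
    by (simp add: prod_encode_def)
  also have "\<dots> \<le> (length w + ?i + 1) ^ 2"
    by (simp add: triangle_def power2_eq_square)
  also have "\<dots> \<le> (n + ?c + 1) ^ 2"
    using assms \<open>?i < ?c\<close> by (intro power_mono) auto
  finally have "prod_encode (length w, ?i) \<le> (n + ?c + 1) ^ 2" .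
  then show ?thesis
    using two_pow_length_bits_le[of "prod_encode (length w, ?i)"]
    by (cases "prod_encode (length w, ?i) = 0") (auto simp: class_code_def bits.simps)
qed

lemma suffix_exp_wstep:
  "suffix_exp (MN L) x y \<Longrightarrow> suffix_exp (MN L) (wstep x s) (wstep y s)"
  using suffix_exp_drop[of "MN L" x y 1] by (cases s) (simp_all add: suffix_exp_MN_append drop_Suc)

definition class_decode :: "'a list set \<Rightarrow> bool list \<Rightarrow> 'a list" where
  "class_decode L s = (SOME w. class_code L w = s)"

lemma suffix_exp_class_decode:
  fixes L :: "'a::finite list set"
  shows "suffix_exp (MN L) (class_decode L (class_code L w)) w"
  using someI[of "\<lambda>w'. class_code L w' = class_code L w" w] by (simp add: class_decode_def class_code_eq_iff)

definition window_alg :: "'a list set \<Rightarrow> 'a swa" where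
  "window_alg L =
    (class_code L [], \<lambda>s a. class_code L (wstep (class_decode L s) a), \<lambda>s. class_decode L s \<in> L)"

lemma run_window_alg:
  fixes L :: "'a::finite list set"
  shows "run (window_alg L) u = class_code L (wnd u)"
proof (induction u rule: rev_induct)
  case (snoc a u)
  have "run (window_alg L) (u @ [a]) = class_code L (wstep (class_decode L (class_code L (wnd u))) a)"
    using snoc by (simp add: run_def window_alg_def)
  also have "\<dots> = class_code L (wstep (wnd u) a)"
    using suffix_exp_wstep[OF suffix_exp_class_decode] class_code_eq_iff by blast
  finally show ?case
    by (simp add: wnd_def)
qed (simp add: run_def window_alg_def wnd_def)

lemma swa_for_window_alg: "swa_for (window_alg (L :: 'a::finite list set)) L"
  unfolding swa_for_def
proof
  fix u
  have "swa_out (window_alg L) (run (window_alg L) u) \<longleftrightarrow> class_decode L (class_code L (wnd u)) \<in> L"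
    by (simp add: run_window_alg) (simp add: swa_out_def window_alg_def)
  also have "\<dots> \<longleftrightarrow> wnd u \<in> L"
    by (rule suffix_exp_MN_mem_iff[OF suffix_exp_class_decode])
  finally show "swa_out (window_alg L) (run (window_alg L) u) \<longleftrightarrow> wnd u \<in> L" .
qed

lemma V_eq_enat_two_pow_le:
  fixes L :: "'a::finite list set"
  obtains b where "V L n = enat b" "2 ^ b \<le> 2 * (n + card (approx_classes L n) + 1) ^ 2"
proof -
  let ?lens = "(\<lambda>w. length (class_code L w)) ` {w. length w \<le> n}"
  have fin: "finite ?lens"
    using finite_lists_length_le[of "UNIV :: 'a set" n] by simp
  have "length (class_code L []) \<in> ?lens"
    by (intro imageI) simp
  then obtain w where "length w \<le> n" and w: "Max ?lens = length (class_code L w)"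
    using Max_in[OF fin] by blast
  have "space (window_alg L) n \<le> enat (Max ?lens)"
    unfolding space_def
  proof (rule SUP_least)
    fix u :: "'a sym list" assume "u \<in> {u. \<forall>i\<le>length u. length (wnd (take i u)) \<le> n}"
    then have "length (wnd (take (length u) u)) \<le> n"
      by blast
    then have "length (class_code L (wnd u)) \<in> ?lens"
      by (intro imageI) simp
    then show "enat (length (run (window_alg L) u)) \<le> enat (Max ?lens)"
      using Max_ge[OF fin] by (simp add: run_window_alg)
  qed
  moreover have "V L n \<le> space (window_alg L) n"
    unfolding V_def by (rule INF_lower) (simp add: swa_for_window_alg)
  ultimately have "V L n \<le> enat (Max ?lens)"
    by (rule order_trans[rotated])
  then obtain b where V: "V L n = enat b" and "b \<le> Max ?lens"
    using enat_ile by fastforce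
  have "2 ^ b \<le> (2::nat) ^ Max ?lens"
    using \<open>b \<le> Max ?lens\<close> by (rule power_increasing) simp
  also have "\<dots> \<le> 2 * (n + card (approx_classes L n) + 1) ^ 2"
    using two_pow_length_class_code_le[OF \<open>length w \<le> n\<close>, of L] w by simp
  finally show ?thesis
    using that V by blast
qed

lemma poly_if_exp_V_bigo_poly:
  fixes L :: "'a::finite list set"
  assumes "(\<lambda>n. 2 ^ the_enat (V L n)) \<in> O(\<lambda>n. real n ^ k)"
  shows "(\<lambda>n. real (card (approx_classes L n))) \<in> O(\<lambda>n. real n ^ Suc k)"
proof -
  have "real (card (approx_classes L n)) \<le> (real n + 1) * 2 * 2 ^ the_enat (V L n)" for n
  proof -
    obtain b where V: "V L n = enat b"
      using V_eq_enat_two_pow_le by blast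
    then have "card (approx_classes L n) \<le> (n + 1) * 2 ^ Suc (the_enat (V L n))"
      using card_approx_classes_le_V[OF V] by simp
    then have "real (card (approx_classes L n)) \<le> real ((n + 1) * 2 ^ Suc (the_enat (V L n)))"
      by (simp only: of_nat_le_iff)
    also have "\<dots> = (real n + 1) * 2 * 2 ^ the_enat (V L n)"
      by (simp add: algebra_simps)
    finally show ?thesis .
  qed
  then have "(\<lambda>n. real (card (approx_classes L n))) \<in> O(\<lambda>n. (real n + 1) * 2 * 2 ^ the_enat (V L n))"
    by (intro bigoI[of _ 1] always_eventually allI) simp
  also have "(\<lambda>n. (real n + 1) * 2 * 2 ^ the_enat (V L n)) \<in> O(\<lambda>n. real n * 1 * real n ^ k)"
    by (intro landau_o.big.mult assms) real_asymp+
  finally show ?thesis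
    by simp
qed

lemma exp_V_bigo_poly_if_poly:
  fixes L :: "'a::finite list set"
  assumes poly: "(\<lambda>n. real (card (approx_classes L n))) \<in> O(\<lambda>n. real n ^ k)"
  shows "(\<lambda>n. 2 ^ the_enat (V L n)) \<in> O(\<lambda>n. real n ^ (Suc k * 2))"
proof -
  let ?c = "\<lambda>n. real (card (approx_classes L n))"
  have "(\<lambda>n. real n) \<in> O(\<lambda>n. real n ^ Suc k)" "(\<lambda>n. 1) \<in> O(\<lambda>n. real n ^ Suc k)"
    using bigo_poly_mono[of "\<lambda>n. real n" 1 "Suc k"] bigo_poly_mono[of "\<lambda>n. 1" 0 "Suc k"] by simp_all
  moreover have "?c \<in> O(\<lambda>n. real n ^ Suc k)"
    by (rule bigo_poly_mono[OF poly]) simp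
  ultimately have "(\<lambda>n. real n + ?c n + 1) \<in> O(\<lambda>n. real n ^ Suc k)"
    by (intro sum_in_bigo)
  from landau_o.big.mult[OF bigo_const[of 2] landau_o.big_power[OF this, of 2]]
  have bound_poly: "(\<lambda>n. 2 * (real n + ?c n + 1) ^ 2) \<in> O(\<lambda>n. (real n ^ Suc k) ^ 2)"
    by simp
  have "(\<lambda>n. 2 ^ the_enat (V L n)) \<in> O(\<lambda>n. 2 * (real n + ?c n + 1) ^ 2)"
  proof (intro bigoI[of _ 1] always_eventually allI)
    fix n
    obtain b where "V L n = enat b" "2 ^ b \<le> 2 * (n + card (approx_classes L n) + 1) ^ 2"
      by (rule V_eq_enat_two_pow_le)
    then have "real (2 ^ the_enat (V L n)) \<le> real (2 * (n + card (approx_classes L n) + 1) ^ 2)"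
      unfolding of_nat_le_iff by simp
    then show "norm ((2::real) ^ the_enat (V L n)) \<le> 1 * norm (2 * (real n + ?c n + 1) ^ 2)"
      by (simp add: add_ac)
  qed
  from landau_o.big_trans[OF this bound_poly] show ?thesis
    by (simp only: power_mult)
qed

lemma V_bigo_ln_iff_poly:
  fixes L :: "'a::finite list set"
  shows "((\<forall>n. V L n \<noteq> \<infinity>) \<and> (\<lambda>n. real (the_enat (V L n))) \<in> O(\<lambda>n. ln (real n)))
    \<longleftrightarrow> (\<exists>k. (\<lambda>n. real (card (approx_classes L n))) \<in> O(\<lambda>n. real n ^ k))"
proof -
  have "V L n \<noteq> \<infinity>" for n
    using V_eq_enat_two_pow_le[of L n] by auto
  moreover have "(\<lambda>n. real (the_enat (V L n))) \<in> O(\<lambda>n. ln (real n))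
      \<longleftrightarrow> (\<exists>k. (\<lambda>n. real (card (approx_classes L n))) \<in> O(\<lambda>n. real n ^ k))"
  proof
    assume "(\<lambda>n. real (the_enat (V L n))) \<in> O(\<lambda>n. ln (real n))"
    then show "\<exists>k. (\<lambda>n. real (card (approx_classes L n))) \<in> O(\<lambda>n. real n ^ k)"
      using exp_bigo_poly_if_bigo_ln[of "\<lambda>n. the_enat (V L n)"] poly_if_exp_V_bigo_poly by blast
  next
    assume "\<exists>k. (\<lambda>n. real (card (approx_classes L n))) \<in> O(\<lambda>n. real n ^ k)"
    then show "(\<lambda>n. real (the_enat (V L n))) \<in> O(\<lambda>n. ln (real n))"
      using exp_V_bigo_poly_if_poly bigo_ln_if_exp_bigo_poly[of "\<lambda>n. the_enat (V L n)"] by blast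
  qed
  ultimately show ?thesis
    by simp
qed

theorem theorem16:
  fixes L :: "('a::finite) list set"
  assumes "regular L"
  shows "(((\<forall>n. V L n \<noteq> \<infinity>) \<and> (\<lambda>n. real (the_enat (V L n))) \<in> O(\<lambda>n. ln (real n)))
           \<longleftrightarrow> (\<exists>k::nat. (\<lambda>n. real (card (approx_classes L n))) \<in> O(\<lambda>n. real n ^ k)))
       \<and> ((\<exists>k::nat. (\<lambda>n. real (card (approx_classes L n))) \<in> O(\<lambda>n. real n ^ k))
           \<longleftrightarrow> \<not> (\<exists>u2 v2 u v. critical_tuple (MN L) u2 v2 u v))"
proof
  show "((\<forall>n. V L n \<noteq> \<infinity>) \<and> (\<lambda>n. real (the_enat (V L n))) \<in> O(\<lambda>n. ln (real n)))
      \<longleftrightarrow> (\<exists>k. (\<lambda>n. real (card (approx_classes L n))) \<in> O(\<lambda>n. real n ^ k))"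
    by (rule V_bigo_ln_iff_poly)
  from assms obtain Q :: "nat set" and q0 :: nat and \<delta> :: "nat \<Rightarrow> 'a \<Rightarrow> nat" and F :: "nat set"
    where "finite Q" "q0 \<in> Q" "\<forall>q\<in>Q. \<forall>a. \<delta> q a \<in> Q" "\<forall>w. w \<in> L \<longleftrightarrow> foldl \<delta> q0 w \<in> F"
    unfolding regular_def by blast
  then interpret dfa L Q q0 \<delta> F
    by unfold_locales auto
  show "(\<exists>k. (\<lambda>n. real (card (approx_classes L n))) \<in> O(\<lambda>n. real n ^ k))
      \<longleftrightarrow> \<not> (\<exists>u2 v2 u v. critical_tuple (MN L) u2 v2 u v)"
  proof
    assume "\<exists>k. (\<lambda>n. real (card (approx_classes L n))) \<in> O(\<lambda>n. real n ^ k)"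
    then obtain k where "(\<lambda>n. real (card (approx_classes L n))) \<in> O(\<lambda>n. real n ^ k)" ..
    then show "\<not> (\<exists>u2 v2 u v. critical_tuple (MN L) u2 v2 u v)"
      using critical_tuple_not_poly[of L _ _ _ _ k] by blast
  qed (rule no_critical_tuple_poly)
qed

end
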